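(* Let $G$ be a graph, $t\in\mathbb{N}$, and let $H$ be a connected subgraph of $G$ such that $\mathrm{tw}\big(G[N_G[H]]\cup\binom{N_G(H)}{2}\big)\le 2$. Let $G'$ be the graph obtained from $G$ by deleting $V(H)$ and adding an edge between every pair of distinct vertices of $N_G(H)$. Then $(G,t)$ has a solution if and only if $(G',t)$ has a solution.
   Context: For a graph $G$ and $t\in\mathbb{N}$, a solution for $(G,t)$ is a set $S\subseteq V(G)$ with $|S|\le t$ and $\mathrm{tw}(G-S)\le 2$ ($\mathrm{tw}$ = treewidth). $N_G(H)$ is the set of vertices outside $V(H)$ adjacent to $V(H)$, $N_G[H]=V(H)\cup N_G(H)$. For a graph $F$ and a set $E'$ of vertex pairs, $F\cup E'$ denotes $F$ with the pairs of $E'$ whose both endpoints lie in $V(F)$ added as edges. *)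

theory Defs
  imports Main
begin

definition wf_graph :: "'a set \<Rightarrow> 'a set set \<Rightarrow> bool" where
  "wf_graph V E \<longleftrightarrow> finite V \<and>
     (\<forall>e\<in>E. \<exists>u v. e = {u, v} \<and> u \<noteq> v \<and> u \<in> V \<and> v \<in> V)"

definition adj_rel :: "'a set set \<Rightarrow> ('a \<times> 'a) set" where
  "adj_rel E = {(u, v). {u, v} \<in> E}"

definition connected_graph :: "'a set \<Rightarrow> 'a set set \<Rightarrow> bool" where
  "connected_graph V E \<longleftrightarrow> V \<noteq> {} \<and>
     (\<forall>u\<in>V. \<forall>v\<in>V. (u, v) \<in> (adj_rel {e\<in>E. e \<subseteq> V})\<^sup>*)"

text \<open>A tree: a connected graph without cycles, i.e. every edge is a bridge.\<close>
definition is_tree :: "'a set \<Rightarrow> 'a set set \<Rightarrow> bool" where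
  "is_tree V E \<longleftrightarrow> wf_graph V E \<and> connected_graph V E \<and>
     (\<forall>e\<in>E. \<forall>u v. e = {u, v} \<longrightarrow> (u, v) \<notin> (adj_rel (E - {e}))\<^sup>*)"

definition induced :: "'a set set \<Rightarrow> 'a set \<Rightarrow> 'a set set" where
  "induced E S = {e\<in>E. (e::'a set) \<subseteq> S}"

definition tree_decomposition ::
  "'a set \<Rightarrow> 'a set set \<Rightarrow> nat set \<Rightarrow> nat set set \<Rightarrow> (nat \<Rightarrow> 'a set) \<Rightarrow> bool" where
  "tree_decomposition V E I F B \<longleftrightarrow>
     is_tree I F \<and>
     (\<forall>i\<in>I. B i \<subseteq> V) \<and>
     (\<forall>v\<in>V. \<exists>i\<in>I. v \<in> B i) \<and>
     (\<forall>e\<in>E. \<exists>i\<in>I. e \<subseteq> B i) \<and>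
     (\<forall>v\<in>V. connected_graph {i\<in>I. v \<in> B i} (induced F {i\<in>I. v \<in> B i}))"

definition tw_le :: "'a set \<Rightarrow> 'a set set \<Rightarrow> nat \<Rightarrow> bool" where
  "tw_le V E k \<longleftrightarrow> (\<exists>I F B. tree_decomposition V E I F B \<and> (\<forall>i\<in>I. card (B i) \<le> k + 1))"

definition del_vertices :: "'a set \<Rightarrow> 'a set set \<Rightarrow> 'a set \<Rightarrow> 'a set \<times> 'a set set" where
  "del_vertices V E S = (V - S, induced E (V - S))"

definition is_solution :: "'a set \<Rightarrow> 'a set set \<Rightarrow> nat \<Rightarrow> 'a set \<Rightarrow> bool" where
  "is_solution V E t S \<longleftrightarrow> S \<subseteq> V \<and> card S \<le> t \<and>
     tw_le (V - S) (induced E (V - S)) 2"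

definition has_solution :: "'a set \<Rightarrow> 'a set set \<Rightarrow> nat \<Rightarrow> bool" where
  "has_solution V E t \<longleftrightarrow> (\<exists>S. is_solution V E t S)"

definition nbhd :: "'a set \<Rightarrow> 'a set set \<Rightarrow> 'a set \<Rightarrow> 'a set" where
  "nbhd V E VH = {v\<in>V - VH. \<exists>u\<in>VH. {u, v} \<in> E}"

definition cl_nbhd :: "'a set \<Rightarrow> 'a set set \<Rightarrow> 'a set \<Rightarrow> 'a set" where
  "cl_nbhd V E VH = VH \<union> nbhd V E VH"

definition clique_edges :: "'a set \<Rightarrow> 'a set set" where
  "clique_edges S = {{u, v} | u v. u \<in> S \<and> v \<in> S \<and> u \<noteq> v}"

definition add_pairs :: "'a set \<Rightarrow> 'a set set \<Rightarrow> 'a set set \<Rightarrow> 'a set set" where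
  "add_pairs VF EF E' = EF \<union> {e\<in>E'. e \<subseteq> VF}"

end

theory Submission
  imports Defs
begin

text \<open>
  If the torso of N[H] has treewidth at most 2, then N(H) has at most two vertices: H together
  with the singletons of N(H) is a family of pairwise touching connected sets in the torso, so by
  the Helly property of subtrees a single bag meets all of them, and that bag contains N(H) and a
  vertex of H.

  Given a solution S of the reduced instance, G - S is the clique sum, along the clique
  N(H) - S, of a subgraph of the torso and of G' - S; a clique lies in a bag of every tree
  decomposition, so decompositions of the two parts can be joined at such bags.

  Given a solution S of (G, t): if at most one vertex of N(H) survives in G - S, then
  S - V(H) solves the reduced instance; if two survive and S meets H, trading S \<inter> V(H) for one
  of them does; otherwise G' - S is obtained from G - S by contracting the connected set V(H)
  into a surviving neighbour, and contraction does not increase treewidth.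
\<close>

section \<open>Paths and connected vertex sets\<close>

lemma adj_rel_iff [simp]: "(x, y) \<in> adj_rel E \<longleftrightarrow> {x, y} \<in> E"
  by (simp add: adj_rel_def)

lemma sym_adj_rel: "sym (adj_rel E)"
  by (auto simp: sym_def insert_commute)

lemma rtrancl_adj_rel_sym: "(x, y) \<in> (adj_rel E)\<^sup>* \<Longrightarrow> (y, x) \<in> (adj_rel E)\<^sup>*"
  using sym_adj_rel sym_rtrancl by (metis symD)

lemma rtrancl_adj_rel_mono: "(x, y) \<in> (adj_rel E)\<^sup>* \<Longrightarrow> E \<subseteq> E' \<Longrightarrow> (x, y) \<in> (adj_rel E')\<^sup>*"
  by (metis adj_rel_iff rtrancl_mono subrelI subsetD)

lemma rtrancl_adj_rel_map:
  assumes "(x, y) \<in> (adj_rel E)\<^sup>*"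
    and "\<And>a b. {a, b} \<in> E \<Longrightarrow> f a = f b \<or> {f a, f b} \<in> E'"
  shows "(f x, f y) \<in> (adj_rel E')\<^sup>*"
  using assms(1)
proof (induction rule: rtrancl_induct)
  case (step y z)
  then show ?case using assms(2) by (metis adj_rel_iff rtrancl.rtrancl_into_rtrancl)
qed simp

lemma rtrancl_adj_rel_induced_closed:
  "(x, y) \<in> (adj_rel (induced F Y))\<^sup>* \<Longrightarrow> x \<in> Y \<Longrightarrow> y \<in> Y"
  by (induction rule: rtrancl_induct) (auto simp: induced_def)

lemma connected_graph_iff:
  "connected_graph X F \<longleftrightarrow> X \<noteq> {} \<and> (\<forall>u\<in>X. \<forall>v\<in>X. (u, v) \<in> (adj_rel (induced F X))\<^sup>*)"
  by (simp add: connected_graph_def induced_def)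

lemma connected_graph_induced_iff:
  "Y \<subseteq> C \<Longrightarrow> connected_graph Y (induced F C) \<longleftrightarrow> connected_graph Y F"
proof -
  assume "Y \<subseteq> C"
  then have "induced (induced F C) Y = induced F Y" by (auto simp: induced_def)
  then show ?thesis by (simp add: connected_graph_iff)
qed

lemma connected_graph_induced_self [simp]: "connected_graph X (induced F X) \<longleftrightarrow> connected_graph X F"
  by (rule connected_graph_induced_iff[OF order_refl])

lemma connected_graph_wf_iff:
  "wf_graph V E \<Longrightarrow> connected_graph V E \<longleftrightarrow> V \<noteq> {} \<and> (\<forall>u\<in>V. \<forall>v\<in>V. (u, v) \<in> (adj_rel E)\<^sup>*)"
proof -
  assume "wf_graph V E"
  then have "{e\<in>E. e \<subseteq> V} = E" by (auto simp: wf_graph_def)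
  then show ?thesis by (simp add: connected_graph_def)
qed

lemma connected_graph_mono: "connected_graph X F \<Longrightarrow> F \<subseteq> F' \<Longrightarrow> connected_graph X F'"
proof -
  assume "connected_graph X F" "F \<subseteq> F'"
  moreover have "induced F X \<subseteq> induced F' X" using \<open>F \<subseteq> F'\<close> by (auto simp: induced_def)
  ultimately show ?thesis
    unfolding connected_graph_iff by (blast intro: rtrancl_adj_rel_mono)
qed

lemma connected_graph_Un:
  assumes "connected_graph X F" "connected_graph Y F" "X \<inter> Y \<noteq> {}"
  shows "connected_graph (X \<union> Y) F"
proof -
  let ?R = "adj_rel (induced F (X \<union> Y))"
  have sub: "induced F X \<subseteq> induced F (X \<union> Y)" "induced F Y \<subseteq> induced F (X \<union> Y)"
    by (auto simp: induced_def)
  have X: "(a, b) \<in> ?R\<^sup>*" if "a \<in> X" "b \<in> X" for a b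
    using assms(1) that sub(1) unfolding connected_graph_iff by (blast intro: rtrancl_adj_rel_mono)
  have Y: "(a, b) \<in> ?R\<^sup>*" if "a \<in> Y" "b \<in> Y" for a b
    using assms(2) that sub(2) unfolding connected_graph_iff by (blast intro: rtrancl_adj_rel_mono)
  obtain z where "z \<in> X" "z \<in> Y" using assms(3) by blast
  then have "(a, b) \<in> ?R\<^sup>*" if "a \<in> X \<union> Y" "b \<in> X \<union> Y" for a b
    using that X Y by (elim UnE) (meson rtrancl_trans)+
  then show ?thesis using assms(1) by (auto simp: connected_graph_iff)
qed

lemma connected_graph_singleton: "connected_graph {x} F"
  by (simp add: connected_graph_iff)

lemma connected_graph_edge: "{a, b} \<in> F \<Longrightarrow> connected_graph {a, b} F"
proof -
  assume "{a, b} \<in> F"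
  then have "{a, b} \<in> induced F {a, b}" by (simp add: induced_def)
  then have "(a, b) \<in> adj_rel (induced F {a, b})" "(b, a) \<in> adj_rel (induced F {a, b})"
    by (simp_all add: insert_commute)
  then show ?thesis by (auto simp: connected_graph_iff)
qed

lemma connected_graph_join:
  assumes "connected_graph T1 F1" "connected_graph T2 F2" "i1 \<in> T1" "i2 \<in> T2"
  shows "connected_graph (T1 \<union> T2) (F1 \<union> F2 \<union> {{i1, i2}})"
proof -
  let ?F = "F1 \<union> F2 \<union> {{i1, i2}}"
  have T1: "connected_graph T1 ?F" by (rule connected_graph_mono[OF assms(1)]) blast
  have T2: "connected_graph T2 ?F" by (rule connected_graph_mono[OF assms(2)]) blast
  have "connected_graph {i1, i2} ?F" by (rule connected_graph_edge) blast
  with T1 have "connected_graph (T1 \<union> {i1, i2}) ?F"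
    by (rule connected_graph_Un) (use assms(3) in blast)
  then have "connected_graph ((T1 \<union> {i1, i2}) \<union> T2) ?F"
    using T2 by (rule connected_graph_Un) (use assms(4) in blast)
  moreover have "(T1 \<union> {i1, i2}) \<union> T2 = T1 \<union> T2" using assms(3,4) by blast
  ultimately show ?thesis by simp
qed

lemma connected_graph_image:
  assumes "connected_graph X F"
  shows "connected_graph (f ` X) ((`) f ` F)"
  unfolding connected_graph_iff
proof (intro conjI ballI)
  show "f ` X \<noteq> {}" using assms by (simp add: connected_graph_iff)
next
  fix p q assume "p \<in> f ` X" "q \<in> f ` X"
  then obtain x y where xy: "x \<in> X" "y \<in> X" "p = f x" "q = f y" by blast
  have "(x, y) \<in> (adj_rel (induced F X))\<^sup>*" using assms xy(1,2) by (simp add: connected_graph_iff)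
  then have "(f x, f y) \<in> (adj_rel (induced ((`) f ` F) (f ` X)))\<^sup>*"
  proof (rule rtrancl_adj_rel_map)
    fix a b assume "{a, b} \<in> induced F X"
    then have "f ` {a, b} \<in> (`) f ` F" "f ` {a, b} \<subseteq> f ` X"
      by (auto simp: induced_def simp del: image_insert image_empty)
    then have "f ` {a, b} \<in> induced ((`) f ` F) (f ` X)" by (simp add: induced_def)
    then show "f a = f b \<or> {f a, f b} \<in> induced ((`) f ` F) (f ` X)" by simp
  qed
  then show "(p, q) \<in> (adj_rel (induced ((`) f ` F) (f ` X)))\<^sup>*" using xy by simp
qed

lemma wf_graph_edge_subset: "wf_graph V E \<Longrightarrow> e \<in> E \<Longrightarrow> e \<subseteq> V"
  by (auto simp: wf_graph_def)

lemma wf_graph_edgeD: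
  "wf_graph V E \<Longrightarrow> e \<in> E \<Longrightarrow> \<exists>a b. e = {a, b} \<and> a \<noteq> b \<and> a \<in> V \<and> b \<in> V"
  by (simp add: wf_graph_def)

lemma wf_graph_finite_edges: "wf_graph V E \<Longrightarrow> finite E"
proof -
  assume "wf_graph V E"
  then have "E \<subseteq> Pow V" "finite V" by (auto simp: wf_graph_def)
  then show ?thesis by (meson finite_Pow_iff finite_subset)
qed

section \<open>Trees and the Helly property of subtrees\<close>

lemma is_tree_connected: "is_tree I F \<Longrightarrow> u \<in> I \<Longrightarrow> v \<in> I \<Longrightarrow> (u, v) \<in> (adj_rel F)\<^sup>*"
  unfolding is_tree_def using connected_graph_wf_iff by blast

lemma is_tree_bridge: "is_tree I F \<Longrightarrow> {u, v} \<in> F \<Longrightarrow> (u, v) \<notin> (adj_rel (F - {{u, v}}))\<^sup>*"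
  by (simp add: is_tree_def)

lemma is_treeI:
  assumes "wf_graph I F" "I \<noteq> {}" "\<And>u v. u \<in> I \<Longrightarrow> v \<in> I \<Longrightarrow> (u, v) \<in> (adj_rel F)\<^sup>*"
    and "\<And>u v. {u, v} \<in> F \<Longrightarrow> (u, v) \<notin> (adj_rel (F - {{u, v}}))\<^sup>*"
  shows "is_tree I F"
  using assms by (auto simp: is_tree_def connected_graph_wf_iff)

lemma is_tree_without_edges:
  fixes I :: "'b set"
  assumes "is_tree I {}" "x \<in> I"
  shows "I = {x}"
proof -
  have "adj_rel {} = ({} :: ('b \<times> 'b) set)" by (simp add: adj_rel_def)
  then have "y = x" if "y \<in> I" for y using is_tree_connected[OF assms(1) that assms(2)] by simp
  then show ?thesis using assms(2) by blast
qed

definition tree_side :: "'b set set \<Rightarrow> 'b \<Rightarrow> 'b \<Rightarrow> 'b set" where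
  "tree_side F u v = {w. (u, w) \<in> (adj_rel (F - {{u, v}}))\<^sup>*}"

lemma mem_tree_side_commute: "w \<in> tree_side F v u \<longleftrightarrow> (v, w) \<in> (adj_rel (F - {{u, v}}))\<^sup>*"
  by (simp add: tree_side_def insert_commute)

context
  fixes I :: "'b set" and F :: "'b set set" and u v :: 'b
  assumes tree: "is_tree I F" and edge: "{u, v} \<in> F"
begin

lemma tree_side_self: "u \<in> tree_side F u v"
  by (simp add: tree_side_def)

lemma tree_side_other: "v \<notin> tree_side F u v"
  using is_tree_bridge[OF tree edge] by (simp add: tree_side_def)

lemma tree_side_subset: "tree_side F u v \<subseteq> I"
proof
  have wf: "wf_graph I F" using tree by (simp add: is_tree_def)
  fix w assume "w \<in> tree_side F u v"
  then have "(u, w) \<in> (adj_rel (F - {{u, v}}))\<^sup>*" by (simp add: tree_side_def)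
  then show "w \<in> I"
  proof (induction rule: rtrancl_induct)
    case base then show ?case using wf_graph_edge_subset[OF wf edge] by simp
  next
    case (step y z) then show ?case using wf_graph_edge_subset[OF wf, of "{y, z}"] by auto
  qed
qed

lemma tree_side_cover: "I \<subseteq> tree_side F u v \<union> tree_side F v u"
proof
  let ?R = "adj_rel (F - {{u, v}})"
  fix w assume "w \<in> I"
  have "u \<in> I" using tree_side_self tree_side_subset by blast
  then have "(u, w) \<in> (adj_rel F)\<^sup>*" using is_tree_connected[OF tree] \<open>w \<in> I\<close> by blast
  then show "w \<in> tree_side F u v \<union> tree_side F v u"
  proof (induction rule: rtrancl_induct)
    case base then show ?case by (simp add: tree_side_def)
  next
    case (step y z)
    show ?case
    proof (cases "{y, z} = {u, v}")
      case True
      then have "z = u \<or> z = v" by (auto simp: doubleton_eq_iff)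
      then show ?thesis using tree_side_self mem_tree_side_commute[of v F v u] by auto
    next
      case False
      then have yz: "(y, z) \<in> ?R" using step(2) by simp
      from step(3) show ?thesis
      proof
        assume "y \<in> tree_side F u v"
        then have "(u, y) \<in> ?R\<^sup>*" by (simp add: tree_side_def)
        then have "(u, z) \<in> ?R\<^sup>*" using yz by (rule rtrancl_into_rtrancl)
        then show ?thesis by (simp add: tree_side_def)
      next
        assume "y \<in> tree_side F v u"
        then have "(v, y) \<in> ?R\<^sup>*" by (simp only: mem_tree_side_commute)
        then have "(v, z) \<in> ?R\<^sup>*" using yz by (rule rtrancl_into_rtrancl)
        then show ?thesis by (simp only: mem_tree_side_commute UnI2)
      qed
    qed
  qed
qed

lemma tree_side_disjoint: "tree_side F u v \<inter> tree_side F v u = {}"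
proof (rule ccontr)
  let ?R = "adj_rel (F - {{u, v}})"
  assume "tree_side F u v \<inter> tree_side F v u \<noteq> {}"
  then obtain w where "w \<in> tree_side F u v" "w \<in> tree_side F v u" by blast
  then have "(u, w) \<in> ?R\<^sup>*" "(v, w) \<in> ?R\<^sup>*"
    using mem_tree_side_commute[of w F v u] by (simp_all add: tree_side_def)
  then have "(u, v) \<in> ?R\<^sup>*" using rtrancl_adj_rel_sym[of v w] rtrancl_trans by fast
  then show False using is_tree_bridge[OF tree edge] by simp
qed

lemma tree_side_path:
  "(u, w) \<in> (adj_rel (F - {{u, v}}))\<^sup>* \<Longrightarrow> (u, w) \<in> (adj_rel (induced F (tree_side F u v)))\<^sup>*"
proof (induction rule: rtrancl_induct)
  case (step y z)
  have "(u, z) \<in> (adj_rel (F - {{u, v}}))\<^sup>*" using step(1,2) by (rule rtrancl_into_rtrancl)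
  then have "y \<in> tree_side F u v" "z \<in> tree_side F u v" using step(1) by (simp_all add: tree_side_def)
  moreover have "{y, z} \<in> F" using step(2) by simp
  ultimately have "(y, z) \<in> adj_rel (induced F (tree_side F u v))" by (simp add: induced_def)
  with step(3) show ?case by (rule rtrancl_into_rtrancl)
qed simp

lemma tree_side_is_tree: "is_tree (tree_side F u v) (induced F (tree_side F u v))"
proof (rule is_treeI)
  let ?C = "tree_side F u v"
  have wf: "wf_graph I F" using tree by (simp add: is_tree_def)
  show "wf_graph ?C (induced F ?C)"
    unfolding wf_graph_def
  proof (intro conjI ballI)
    show "finite ?C" using wf tree_side_subset finite_subset by (auto simp: wf_graph_def)
  next
    fix e assume "e \<in> induced F ?C"
    then show "\<exists>a b. e = {a, b} \<and> a \<noteq> b \<and> a \<in> ?C \<and> b \<in> ?C"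
      using wf_graph_edgeD[OF wf] by (fastforce simp: induced_def)
  qed
  show "?C \<noteq> {}" using tree_side_self by blast
  show "(a, b) \<in> (adj_rel (induced F ?C))\<^sup>*" if "a \<in> ?C" "b \<in> ?C" for a b
  proof -
    have "(u, a) \<in> (adj_rel (induced F ?C))\<^sup>*" "(u, b) \<in> (adj_rel (induced F ?C))\<^sup>*"
      using that tree_side_path by (simp_all add: tree_side_def)
    then show ?thesis using rtrancl_adj_rel_sym rtrancl_trans by fast
  qed
  show "(a, b) \<notin> (adj_rel (induced F ?C - {{a, b}}))\<^sup>*" if "{a, b} \<in> induced F ?C" for a b
  proof
    assume "(a, b) \<in> (adj_rel (induced F ?C - {{a, b}}))\<^sup>*"
    moreover have "induced F ?C - {{a, b}} \<subseteq> F - {{a, b}}" by (auto simp: induced_def)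
    ultimately have "(a, b) \<in> (adj_rel (F - {{a, b}}))\<^sup>*" by (rule rtrancl_adj_rel_mono)
    moreover have "{a, b} \<in> F" using that by (simp add: induced_def)
    ultimately show False using is_tree_bridge[OF tree] by blast
  qed
qed

lemma tree_side_card_less: "card (induced F (tree_side F u v)) < card F"
proof -
  have "induced F (tree_side F u v) \<subseteq> F - {{u, v}}"
    using tree_side_other by (auto simp: induced_def)
  then have "induced F (tree_side F u v) \<subset> F" using edge by blast
  moreover have "finite F" using tree wf_graph_finite_edges by (auto simp: is_tree_def)
  ultimately show ?thesis by (simp add: psubset_card_mono)
qed

lemma induced_path_from_tree_side:
  assumes "(x, w) \<in> (adj_rel (induced F X))\<^sup>*" "x \<in> tree_side F u v"
  shows "(w \<in> tree_side F u v \<and> (x, w) \<in> (adj_rel (induced F (X \<inter> tree_side F u v)))\<^sup>*)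
         \<or> (x, u) \<in> (adj_rel (induced F (X \<inter> tree_side F u v)))\<^sup>*"
  using assms(1)
proof (induction rule: rtrancl_induct)
  case base then show ?case using assms(2) by simp
next
  case (step y z)
  let ?C = "tree_side F u v"
  let ?R = "adj_rel (induced F (X \<inter> ?C))"
  show ?case
  proof (cases "(x, u) \<in> ?R\<^sup>*")
    case False
    then have y: "y \<in> ?C" "(x, y) \<in> ?R\<^sup>*" using step(3) by auto
    have yz: "{y, z} \<in> F" "y \<in> X" "z \<in> X" using step(2) by (auto simp: induced_def)
    show ?thesis
    proof (cases "{y, z} = {u, v}")
      case True
      then have "y = u" using y(1) tree_side_other by (auto simp: doubleton_eq_iff)
      then show ?thesis using y(2) by simp
    next
      case False
      then have "(y, z) \<in> adj_rel (F - {{u, v}})" using yz by simp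
      then have "z \<in> ?C" using y(1) unfolding tree_side_def by (blast intro: rtrancl_into_rtrancl)
      then have "(y, z) \<in> ?R" using y(1) yz by (auto simp: induced_def)
      then show ?thesis using y(2) \<open>z \<in> ?C\<close> by (meson rtrancl.rtrancl_into_rtrancl)
    qed
  qed simp
qed

lemma connected_graph_Int_tree_side:
  assumes "connected_graph X F" "X \<inter> tree_side F u v \<noteq> {}"
  shows "connected_graph (X \<inter> tree_side F u v) F"
  unfolding connected_graph_iff
proof (intro conjI ballI)
  let ?C = "tree_side F u v"
  let ?R = "adj_rel (induced F (X \<inter> ?C))"
  show "X \<inter> ?C \<noteq> {}" by fact
  fix a b assume a: "a \<in> X \<inter> ?C" and b: "b \<in> X \<inter> ?C"
  have "(a, b) \<in> (adj_rel (induced F X))\<^sup>*" "(b, a) \<in> (adj_rel (induced F X))\<^sup>*"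
    using assms(1) a b unfolding connected_graph_iff by auto
  then have "(a, b) \<in> ?R\<^sup>* \<or> (a, u) \<in> ?R\<^sup>*" "(b, a) \<in> ?R\<^sup>* \<or> (b, u) \<in> ?R\<^sup>*"
    using induced_path_from_tree_side a b by blast+
  then show "(a, b) \<in> ?R\<^sup>*"
    using rtrancl_adj_rel_sym[of b u] rtrancl_adj_rel_sym[of b a] rtrancl_trans[of a u ?R b] by blast
qed

lemma connected_graph_crossing_tree_side:
  assumes "connected_graph X F" "x \<in> X \<inter> tree_side F u v" "y \<in> X - tree_side F u v"
  shows "u \<in> X"
proof -
  have "(x, y) \<in> (adj_rel (induced F X))\<^sup>*" using assms by (auto simp: connected_graph_iff)
  then have "(x, u) \<in> (adj_rel (induced F (X \<inter> tree_side F u v)))\<^sup>*"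
    using induced_path_from_tree_side assms(2,3) by blast
  then show ?thesis using assms(2) rtrancl_adj_rel_induced_closed by fastforce
qed

lemma connected_graphs_Int_tree_side_intersect:
  assumes "connected_graph X F" "connected_graph Y F" "X \<inter> Y \<noteq> {}"
    and "X \<inter> tree_side F u v \<noteq> {}" "Y \<inter> tree_side F u v \<noteq> {}"
  shows "(X \<inter> tree_side F u v) \<inter> (Y \<inter> tree_side F u v) \<noteq> {}"
proof (cases "X \<subseteq> tree_side F u v \<or> Y \<subseteq> tree_side F u v")
  case True
  then show ?thesis using assms(3) by blast
next
  case False
  then have "u \<in> X" "u \<in> Y"
    using connected_graph_crossing_tree_side assms by blast+
  then show ?thesis using tree_side_self by blast
qed


lemma tree_side_restrict_subtrees:
  assumes subtrees: "\<forall>X\<in>\<X>. X \<subseteq> I \<and> connected_graph X F" and meet: "\<forall>X\<in>\<X>. \<forall>Y\<in>\<X>. X \<inter> Y \<noteq> {}"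
    and hits: "\<forall>X\<in>\<X>. X \<inter> tree_side F u v \<noteq> {}"
  shows "\<forall>Y\<in>(\<lambda>X. X \<inter> tree_side F u v) ` \<X>.
           Y \<subseteq> tree_side F u v \<and> connected_graph Y (induced F (tree_side F u v))"
    and "\<forall>X'\<in>(\<lambda>X. X \<inter> tree_side F u v) ` \<X>. \<forall>Y'\<in>(\<lambda>X. X \<inter> tree_side F u v) ` \<X>. X' \<inter> Y' \<noteq> {}"
proof -
  let ?C = "tree_side F u v"
  show "\<forall>Y\<in>(\<lambda>X. X \<inter> ?C) ` \<X>. Y \<subseteq> ?C \<and> connected_graph Y (induced F ?C)"
    using subtrees hits connected_graph_Int_tree_side by (simp add: connected_graph_induced_iff)
  show "\<forall>X'\<in>(\<lambda>X. X \<inter> ?C) ` \<X>. \<forall>Y'\<in>(\<lambda>X. X \<inter> ?C) ` \<X>. X' \<inter> Y' \<noteq> {}"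
  proof (intro ballI)
    fix X' Y' assume "X' \<in> (\<lambda>X. X \<inter> ?C) ` \<X>" "Y' \<in> (\<lambda>X. X \<inter> ?C) ` \<X>"
    then obtain X Y where XY: "X \<in> \<X>" "Y \<in> \<X>" "X' = X \<inter> ?C" "Y' = Y \<inter> ?C" by blast
    show "X' \<inter> Y' \<noteq> {}" unfolding XY(3,4)
      by (rule connected_graphs_Int_tree_side_intersect) (use XY(1,2) subtrees hits meet in auto)
  qed
qed

end

theorem subtrees_Helly:
  assumes "is_tree I F" "\<X> \<noteq> {}" "\<forall>X\<in>\<X>. X \<subseteq> I \<and> connected_graph X F"
    and "\<forall>X\<in>\<X>. \<forall>Y\<in>\<X>. X \<inter> Y \<noteq> {}"
  shows "\<exists>i\<in>I. \<forall>X\<in>\<X>. i \<in> X"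
  using assms
proof (induction "card F" arbitrary: I F \<X> rule: less_induct)
  case less
  note tree = less.prems(1) and subtrees = less.prems(3) and meet = less.prems(4)
  show ?case
  proof (cases "F = {}")
    case True
    obtain X0 x where "X0 \<in> \<X>" "x \<in> X0" using less.prems(2) meet by blast
    then have x: "x \<in> I" using subtrees by blast
    have "is_tree I {}" using tree True by simp
    then have I: "I = {x}" using x by (rule is_tree_without_edges)
    have "x \<in> X" if X: "X \<in> \<X>" for X
    proof -
      have "X \<noteq> {}" using meet[rule_format, OF X X] by blast
      moreover have "X \<subseteq> {x}" using subtrees X I by blast
      ultimately show ?thesis by blast
    qed
    then show ?thesis using I by blast
  next
    case False
    have recurse: "\<exists>i\<in>I. \<forall>X\<in>\<X>. i \<in> X"
      if edge: "{a, b} \<in> F" and hits: "\<forall>X\<in>\<X>. X \<inter> tree_side F a b \<noteq> {}" for a b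
    proof -
      let ?C = "tree_side F a b"
      note restricted = tree_side_restrict_subtrees[OF tree edge subtrees meet hits]
      have "\<exists>i\<in>?C. \<forall>Y\<in>(\<lambda>X. X \<inter> ?C) ` \<X>. i \<in> Y"
        by (rule less.hyps[OF tree_side_card_less[OF tree edge] tree_side_is_tree[OF tree edge] _ restricted])
          (use less.prems(2) in blast)
      then obtain i where i: "i \<in> ?C" "\<forall>Y\<in>(\<lambda>X. X \<inter> ?C) ` \<X>. i \<in> Y" ..
      then have "\<forall>X\<in>\<X>. i \<in> X" by simp
      then show ?thesis using i(1) tree_side_subset[OF tree edge] by blast
    qed
    obtain e where e: "e \<in> F" using False by blast
    have "wf_graph I F" using tree by (simp add: is_tree_def)
    then obtain u v where "e = {u, v}" using wf_graph_edgeD e by blast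
    then have edge: "{u, v} \<in> F" using e by simp
    then have edge': "{v, u} \<in> F" by (simp add: insert_commute)
    show ?thesis
    proof (rule ccontr)
      assume "\<not> ?thesis"
      then obtain X Y where XY: "X \<in> \<X>" "Y \<in> \<X>"
        and "X \<inter> tree_side F u v = {}" "Y \<inter> tree_side F v u = {}"
        using recurse[OF edge] recurse[OF edge'] by blast
      moreover have "X \<subseteq> I" "Y \<subseteq> I" using subtrees XY by blast+
      ultimately have "X \<inter> Y \<subseteq> tree_side F u v \<inter> tree_side F v u"
        using tree_side_cover[OF tree edge] by blast
      then show False using tree_side_disjoint[OF tree edge] meet[rule_format, OF XY] by blast
    qed
  qed
qed

section \<open>Tree decompositions\<close>

lemma tree_decompositionD:
  assumes "tree_decomposition V E I F B"
  shows "is_tree I F" and "i \<in> I \<Longrightarrow> B i \<subseteq> V" and "v \<in> V \<Longrightarrow> \<exists>i\<in>I. v \<in> B i"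
    and "e \<in> E \<Longrightarrow> \<exists>i\<in>I. e \<subseteq> B i" and "v \<in> V \<Longrightarrow> connected_graph {i\<in>I. v \<in> B i} F"
  using assms by (auto simp: tree_decomposition_def)

lemma tree_decomposition_nodes_connected:
  assumes td: "tree_decomposition V E I F B" and X: "X \<subseteq> V" "connected_graph X E"
  shows "connected_graph {i\<in>I. B i \<inter> X \<noteq> {}} F"
  unfolding connected_graph_iff
proof (intro conjI ballI)
  let ?U = "{i\<in>I. B i \<inter> X \<noteq> {}}"
  let ?R = "adj_rel (induced F ?U)"
  obtain x where "x \<in> X" using X(2) by (auto simp: connected_graph_def)
  then show "?U \<noteq> {}" using tree_decompositionD(3)[OF td] X(1) by blast
  have common: "(i, j) \<in> ?R\<^sup>*" if "x \<in> X" "i \<in> I" "x \<in> B i" "j \<in> I" "x \<in> B j" for x i j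
  proof -
    have "connected_graph {i\<in>I. x \<in> B i} F" using tree_decompositionD(5)[OF td] that(1) X(1) by blast
    then have "(i, j) \<in> (adj_rel (induced F {i\<in>I. x \<in> B i}))\<^sup>*"
      using that(2-5) unfolding connected_graph_iff by blast
    moreover have "induced F {i\<in>I. x \<in> B i} \<subseteq> induced F ?U"
      using that(1) by (auto simp: induced_def)
    ultimately show ?thesis by (rule rtrancl_adj_rel_mono)
  qed
  fix i j assume i: "i \<in> ?U" and j: "j \<in> ?U"
  obtain h where h: "h \<in> B i" "h \<in> X" using i by blast
  obtain h' where h': "h' \<in> B j" "h' \<in> X" using j by blast
  have "(h, h') \<in> (adj_rel (induced E X))\<^sup>*" using X(2) h(2) h'(2) by (simp add: connected_graph_iff)
  then have "\<forall>j\<in>I. h' \<in> B j \<longrightarrow> (i, j) \<in> ?R\<^sup>*"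
  proof (induction rule: rtrancl_induct)
    case base
    then show ?case using common[OF h(2) _ h(1)] i by blast
  next
    case (step y z)
    then have "{y, z} \<in> E" "y \<in> X" "z \<in> X" by (auto simp: induced_def)
    then obtain k where k: "k \<in> I" "{y, z} \<subseteq> B k" using tree_decompositionD(4)[OF td] by blast
    then have "(i, k) \<in> ?R\<^sup>*" using step.IH by blast
    moreover have "(k, j) \<in> ?R\<^sup>*" if "j \<in> I" "z \<in> B j" for j
      using common[of z k j] k that \<open>z \<in> X\<close> by blast
    ultimately show ?case using rtrancl_trans[of i k ?R] by blast
  qed
  then show "(i, j) \<in> ?R\<^sup>*" using j h' by blast
qed

text \<open>The nodes whose bags meet a member form a subtree, and touching members give intersecting
  subtrees, so the Helly property of subtrees applies.\<close>
lemma tree_decomposition_bramble_bag: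
  assumes td: "tree_decomposition V E I F B" and "\<X> \<noteq> {}"
    and conn: "\<forall>X\<in>\<X>. X \<subseteq> V \<and> connected_graph X E"
    and touch: "\<forall>X\<in>\<X>. \<forall>Y\<in>\<X>. X \<inter> Y \<noteq> {} \<or> (\<exists>x\<in>X. \<exists>y\<in>Y. {x, y} \<in> E)"
  shows "\<exists>i\<in>I. \<forall>X\<in>\<X>. B i \<inter> X \<noteq> {}"
proof -
  let ?nodes = "\<lambda>X. {i\<in>I. B i \<inter> X \<noteq> {}}"
  have "\<exists>i\<in>I. \<forall>N\<in>?nodes ` \<X>. i \<in> N"
  proof (rule subtrees_Helly[OF tree_decompositionD(1)[OF td]])
    show "?nodes ` \<X> \<noteq> {}" using assms(2) by blast
    show "\<forall>N\<in>?nodes ` \<X>. N \<subseteq> I \<and> connected_graph N F"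
    proof
      fix N assume "N \<in> ?nodes ` \<X>"
      then obtain X where "X \<in> \<X>" "N = ?nodes X" by blast
      then show "N \<subseteq> I \<and> connected_graph N F"
        using conn tree_decomposition_nodes_connected[OF td, of X] by simp
    qed
    show "\<forall>M\<in>?nodes ` \<X>. \<forall>N\<in>?nodes ` \<X>. M \<inter> N \<noteq> {}"
    proof (intro ballI)
      fix M N assume "M \<in> ?nodes ` \<X>" "N \<in> ?nodes ` \<X>"
      then obtain X Y where XY: "X \<in> \<X>" "Y \<in> \<X>" "M = ?nodes X" "N = ?nodes Y" by blast
      have "X \<inter> Y \<noteq> {} \<or> (\<exists>x\<in>X. \<exists>y\<in>Y. {x, y} \<in> E)" using touch XY(1,2) by simp
      then consider x where "x \<in> X" "x \<in> Y" | x y where "x \<in> X" "y \<in> Y" "{x, y} \<in> E"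
        by blast
      then show "M \<inter> N \<noteq> {}"
      proof cases
        case (1 x)
        have "x \<in> V" using conn XY(1) 1 by blast
        then obtain i where "i \<in> I" "x \<in> B i" using tree_decompositionD(3)[OF td] by blast
        then have "i \<in> M \<inter> N" using 1 XY(3,4) by blast
        then show ?thesis by blast
      next
        case (2 x y)
        then obtain i where "i \<in> I" "{x, y} \<subseteq> B i" using tree_decompositionD(4)[OF td] by blast
        then have "i \<in> M \<inter> N" using 2 XY(3,4) by blast
        then show ?thesis by blast
      qed
    qed
  qed
  then show ?thesis by auto
qed

lemma tree_decomposition_clique_in_bag:
  assumes td: "tree_decomposition V E I F B" and "K \<subseteq> V"
    and clique: "\<forall>x\<in>K. \<forall>y\<in>K. x \<noteq> y \<longrightarrow> {x, y} \<in> E"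
  shows "\<exists>i\<in>I. K \<subseteq> B i"
proof (cases "K = {}")
  case True
  have "I \<noteq> {}" using tree_decompositionD(1)[OF td] by (simp add: is_tree_def connected_graph_def)
  then show ?thesis using True by blast
next
  case False
  have "\<exists>i\<in>I. \<forall>X\<in>(\<lambda>x. {x}) ` K. B i \<inter> X \<noteq> {}"
    by (rule tree_decomposition_bramble_bag[OF td])
      (use False \<open>K \<subseteq> V\<close> clique connected_graph_singleton in auto)
  then show ?thesis by auto
qed

text \<open>A connected set adjacent to every vertex of a clique acts as one more clique vertex.\<close>
lemma tree_decomposition_bag_meets_and_contains:
  assumes td: "tree_decomposition V E I F B" and X: "X \<subseteq> V" "connected_graph X E" and "K \<subseteq> V"
    and clique: "\<forall>x\<in>K. \<forall>y\<in>K. x \<noteq> y \<longrightarrow> {x, y} \<in> E"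
    and adj: "\<forall>y\<in>K. \<exists>x\<in>X. {x, y} \<in> E"
  shows "\<exists>i\<in>I. B i \<inter> X \<noteq> {} \<and> K \<subseteq> B i"
proof -
  let ?\<X> = "insert X ((\<lambda>x. {x}) ` K)"
  have "\<exists>i\<in>I. \<forall>Y\<in>?\<X>. B i \<inter> Y \<noteq> {}"
  proof (rule tree_decomposition_bramble_bag[OF td])
    show "?\<X> \<noteq> {}" by blast
    show "\<forall>Y\<in>?\<X>. Y \<subseteq> V \<and> connected_graph Y E"
      using X \<open>K \<subseteq> V\<close> connected_graph_singleton by auto
    have "X \<noteq> {}" using X(2) by (simp add: connected_graph_def)
    show "\<forall>Y\<in>?\<X>. \<forall>Z\<in>?\<X>. Y \<inter> Z \<noteq> {} \<or> (\<exists>y\<in>Y. \<exists>z\<in>Z. {y, z} \<in> E)"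
    proof (intro ballI)
      fix Y Z assume "Y \<in> ?\<X>" "Z \<in> ?\<X>"
      then consider "Y = X" "Z = X" | x where "Y = X" "Z = {x}" "x \<in> K"
        | x where "Y = {x}" "Z = X" "x \<in> K" | x y where "Y = {x}" "Z = {y}" "x \<in> K" "y \<in> K"
        by blast
      then show "Y \<inter> Z \<noteq> {} \<or> (\<exists>y\<in>Y. \<exists>z\<in>Z. {y, z} \<in> E)"
      proof cases
        case 1
        then show ?thesis using \<open>X \<noteq> {}\<close> by blast
      next
        case (2 x)
        then show ?thesis using adj by blast
      next
        case (3 x)
        then show ?thesis using adj by (auto simp: insert_commute)
      next
        case (4 x y)
        then show ?thesis using clique by (cases "x = y") auto
      qed
    qed
  qed
  then obtain i where "i \<in> I" "\<forall>Y\<in>?\<X>. B i \<inter> Y \<noteq> {}" ..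
  then show ?thesis by auto
qed

lemma tw_le_subgraph:
  assumes "tw_le V E k" "finite V" "V' \<subseteq> V" "E' \<subseteq> induced E V'"
  shows "tw_le V' E' k"
proof -
  obtain I F B where td: "tree_decomposition V E I F B" and width: "\<forall>i\<in>I. card (B i) \<le> k + 1"
    using assms(1) by (auto simp: tw_le_def)
  have "tree_decomposition V' E' I F (\<lambda>i. B i \<inter> V')"
    unfolding tree_decomposition_def
  proof (intro conjI ballI)
    fix v assume v: "v \<in> V'"
    then show "\<exists>i\<in>I. v \<in> B i \<inter> V'" using tree_decompositionD(3)[OF td] assms(3) by blast
    have "{i\<in>I. v \<in> B i \<inter> V'} = {i\<in>I. v \<in> B i}" using v by blast
    then show "connected_graph {i\<in>I. v \<in> B i \<inter> V'} (induced F {i\<in>I. v \<in> B i \<inter> V'})"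
      using tree_decompositionD(5)[OF td] v assms(3) connected_graph_induced_iff[OF order_refl] by auto
  next
    fix e assume "e \<in> E'"
    then have "e \<in> E" "e \<subseteq> V'" using assms(4) by (auto simp: induced_def)
    then show "\<exists>i\<in>I. e \<subseteq> B i \<inter> V'" using tree_decompositionD(4)[OF td] by blast
  qed (use tree_decompositionD(1)[OF td] in auto)
  moreover have "card (B i \<inter> V') \<le> k + 1" if "i \<in> I" for i
  proof -
    have "finite (B i)" using tree_decompositionD(2)[OF td that] assms(2) finite_subset by blast
    then show ?thesis using width that card_mono[of "B i" "B i \<inter> V'"] by fastforce
  qed
  ultimately show ?thesis unfolding tw_le_def by blast
qed

section \<open>Joining and contracting tree decompositions\<close>

lemma wf_graph_image:
  assumes wf: "wf_graph V E" and inj: "inj_on f V"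
  shows "wf_graph (f ` V) ((`) f ` E)"
  unfolding wf_graph_def
proof (intro conjI ballI)
  show "finite (f ` V)" using wf by (simp add: wf_graph_def)
  fix e' assume "e' \<in> (`) f ` E"
  then obtain a b where "e' = f ` {a, b}" "a \<noteq> b" "a \<in> V" "b \<in> V"
    using wf_graph_edgeD[OF wf] by blast
  moreover have "f a \<noteq> f b" using inj calculation(2-4) by (meson inj_on_contraD)
  ultimately show "\<exists>u v. e' = {u, v} \<and> u \<noteq> v \<and> u \<in> f ` V \<and> v \<in> f ` V" by auto
qed

lemma is_tree_image:
  assumes tree: "is_tree I F" and inj: "inj_on f I"
  shows "is_tree (f ` I) ((`) f ` F)"
proof (rule is_treeI)
  have wf: "wf_graph I F" using tree by (simp add: is_tree_def)
  let ?g = "inv_into I f"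
  have edge_in: "e \<subseteq> I" if "e \<in> F" for e using wf_graph_edge_subset[OF wf that] .
  show "wf_graph (f ` I) ((`) f ` F)" using wf inj by (rule wf_graph_image)
  show "f ` I \<noteq> {}" using tree by (simp add: is_tree_def connected_graph_def)
  show "(p, q) \<in> (adj_rel ((`) f ` F))\<^sup>*" if pq: "p \<in> f ` I" "q \<in> f ` I" for p q
  proof -
    obtain x y where "x \<in> I" "y \<in> I" "p = f x" "q = f y" using pq by blast
    moreover have "(f x, f y) \<in> (adj_rel ((`) f ` F))\<^sup>*"
      using is_tree_connected[OF tree \<open>x \<in> I\<close> \<open>y \<in> I\<close>]
    proof (rule rtrancl_adj_rel_map)
      fix a b assume "{a, b} \<in> F"
      then have "f ` {a, b} \<in> (`) f ` F" by (rule imageI)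
      then show "f a = f b \<or> {f a, f b} \<in> (`) f ` F" by simp
    qed
    ultimately show ?thesis by simp
  qed
  show "(p, q) \<notin> (adj_rel ((`) f ` F - {{p, q}}))\<^sup>*" if pq: "{p, q} \<in> (`) f ` F" for p q
  proof
    assume path: "(p, q) \<in> (adj_rel ((`) f ` F - {{p, q}}))\<^sup>*"
    have preimage: "?g ` d \<in> F \<and> f ` ?g ` d = d" if d: "d \<in> (`) f ` F" for d
    proof -
      obtain e where "e \<in> F" "d = f ` e" using d by blast
      then show ?thesis using inv_into_image_cancel[OF inj edge_in] by auto
    qed
    have "(?g p, ?g q) \<in> (adj_rel (F - {?g ` {p, q}}))\<^sup>*"
      using path
    proof (rule rtrancl_adj_rel_map)
      fix x y assume xy: "{x, y} \<in> (`) f ` F - {{p, q}}"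
      then have xy': "{x, y} \<in> (`) f ` F" "{x, y} \<noteq> {p, q}" by auto
      then have "?g ` {x, y} \<noteq> ?g ` {p, q}" using preimage[OF xy'(1)] preimage[OF pq] by metis
      then show "?g x = ?g y \<or> {?g x, ?g y} \<in> F - {?g ` {p, q}}" using preimage[OF xy'(1)] by simp
    qed
    moreover have "{?g p, ?g q} \<in> F" using preimage[OF pq] by simp
    ultimately show False using is_tree_bridge[OF tree] by simp
  qed
qed

text \<open>Collapsing the second tree onto the attachment node of the first one turns paths of the
  joined tree that avoid an edge of the first tree into paths of the first tree.\<close>
lemma is_tree_join_bridge:
  assumes T1: "is_tree I1 F1" and T2: "is_tree I2 F2" and disj: "I1 \<inter> I2 = {}"
    and i1: "i1 \<in> I1" and i2: "i2 \<in> I2" and e: "{p, q} \<in> F1"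
  shows "(p, q) \<notin> (adj_rel (F1 \<union> F2 \<union> {{i1, i2}} - {{p, q}}))\<^sup>*"
proof
  assume path: "(p, q) \<in> (adj_rel (F1 \<union> F2 \<union> {{i1, i2}} - {{p, q}}))\<^sup>*"
  have wf1: "wf_graph I1 F1" and wf2: "wf_graph I2 F2" using T1 T2 by (simp_all add: is_tree_def)
  let ?\<pi> = "\<lambda>x. if x \<in> I1 then x else i1"
  have "(?\<pi> p, ?\<pi> q) \<in> (adj_rel (F1 - {{p, q}}))\<^sup>*"
    using path
  proof (rule rtrancl_adj_rel_map)
    fix x y assume xy: "{x, y} \<in> F1 \<union> F2 \<union> {{i1, i2}} - {{p, q}}"
    consider "{x, y} \<in> F1" | "{x, y} \<in> F2" | "{x, y} = {i1, i2}" using xy by blast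
    then show "?\<pi> x = ?\<pi> y \<or> {?\<pi> x, ?\<pi> y} \<in> F1 - {{p, q}}"
    proof cases
      case 1
      then show ?thesis using wf_graph_edge_subset[OF wf1 1] xy by simp
    next
      case 2
      then show ?thesis using wf_graph_edge_subset[OF wf2 2] disj by auto
    next
      case 3
      then show ?thesis using i1 i2 disj by (auto simp: doubleton_eq_iff)
    qed
  qed
  moreover have "p \<in> I1" "q \<in> I1" using wf_graph_edge_subset[OF wf1 e] by auto
  ultimately show False using is_tree_bridge[OF T1 e] by simp
qed

lemma is_tree_join_link_bridge:
  assumes wf1: "wf_graph I1 F1" and wf2: "wf_graph I2 F2" and disj: "I1 \<inter> I2 = {}"
    and i1: "i1 \<in> I1" and i2: "i2 \<in> I2"
  shows "(i1, i2) \<notin> (adj_rel (F1 \<union> F2 \<union> {{i1, i2}} - {{i1, i2}}))\<^sup>*"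
proof
  assume "(i1, i2) \<in> (adj_rel (F1 \<union> F2 \<union> {{i1, i2}} - {{i1, i2}}))\<^sup>*"
  then have "((\<lambda>x. x \<in> I1) i1, (\<lambda>x. x \<in> I1) i2) \<in> (adj_rel {})\<^sup>*"
  proof (rule rtrancl_adj_rel_map)
    fix x y assume "{x, y} \<in> F1 \<union> F2 \<union> {{i1, i2}} - {{i1, i2}}"
    then have "{x, y} \<subseteq> I1 \<or> {x, y} \<subseteq> I2"
      using wf_graph_edge_subset[OF wf1] wf_graph_edge_subset[OF wf2] by blast
    then show "(x \<in> I1) = (y \<in> I1) \<or> {x \<in> I1, y \<in> I1} \<in> {}" using disj by blast
  qed
  then show False using i1 i2 disj by (auto simp: adj_rel_def)
qed

lemma wf_graph_join:
  assumes wf1: "wf_graph I1 F1" and wf2: "wf_graph I2 F2" and "i1 \<in> I1" "i2 \<in> I2" "i1 \<noteq> i2"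
  shows "wf_graph (I1 \<union> I2) (F1 \<union> F2 \<union> {{i1, i2}})"
  unfolding wf_graph_def
proof (intro conjI ballI)
  show "finite (I1 \<union> I2)" using wf1 wf2 by (simp add: wf_graph_def)
  fix e assume "e \<in> F1 \<union> F2 \<union> {{i1, i2}}"
  then consider "e \<in> F1" | "e \<in> F2" | "e = {i1, i2}" by blast
  then show "\<exists>u v. e = {u, v} \<and> u \<noteq> v \<and> u \<in> I1 \<union> I2 \<and> v \<in> I1 \<union> I2"
  proof cases
    case 1 then show ?thesis using wf_graph_edgeD[OF wf1] by blast
  next
    case 2 then show ?thesis using wf_graph_edgeD[OF wf2] by blast
  next
    case 3 then show ?thesis using assms(3-5) by blast
  qed
qed

lemma is_tree_join:
  assumes T1: "is_tree I1 F1" and T2: "is_tree I2 F2" and disj: "I1 \<inter> I2 = {}"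
    and i1: "i1 \<in> I1" and i2: "i2 \<in> I2"
  shows "is_tree (I1 \<union> I2) (F1 \<union> F2 \<union> {{i1, i2}})"
proof (rule is_treeI)
  let ?F = "F1 \<union> F2 \<union> {{i1, i2}}"
  have wf1: "wf_graph I1 F1" and wf2: "wf_graph I2 F2" using T1 T2 by (simp_all add: is_tree_def)
  show "wf_graph (I1 \<union> I2) ?F" using wf_graph_join[OF wf1 wf2 i1 i2] disj i1 i2 by blast
  show "I1 \<union> I2 \<noteq> {}" using i1 by blast
  have to_i1: "(x, i1) \<in> (adj_rel ?F)\<^sup>*" if "x \<in> I1 \<union> I2" for x
  proof (cases "x \<in> I1")
    case True
    have "F1 \<subseteq> ?F" by blast
    with is_tree_connected[OF T1 True i1] show ?thesis by (rule rtrancl_adj_rel_mono)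
  next
    case False
    then have "x \<in> I2" using that by blast
    have "F2 \<subseteq> ?F" by blast
    with is_tree_connected[OF T2 \<open>x \<in> I2\<close> i2] have "(x, i2) \<in> (adj_rel ?F)\<^sup>*"
      by (rule rtrancl_adj_rel_mono)
    moreover have "(i2, i1) \<in> adj_rel ?F" by (simp add: insert_commute)
    ultimately show ?thesis by (rule rtrancl_into_rtrancl)
  qed
  show "(x, y) \<in> (adj_rel ?F)\<^sup>*" if "x \<in> I1 \<union> I2" "y \<in> I1 \<union> I2" for x y
    using to_i1[OF that(1)] rtrancl_adj_rel_sym[OF to_i1[OF that(2)]] by (rule rtrancl_trans)
  show "(p, q) \<notin> (adj_rel (?F - {{p, q}}))\<^sup>*" if pq: "{p, q} \<in> ?F" for p q
  proof -
    consider "{p, q} \<in> F1" | "{p, q} \<in> F2" | "{p, q} = {i1, i2}" using pq by blast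
    then show ?thesis
    proof cases
      case 1
      then show ?thesis by (rule is_tree_join_bridge[OF T1 T2 disj i1 i2])
    next
      case 2
      have "?F = F2 \<union> F1 \<union> {{i2, i1}}" by (auto simp: insert_commute)
      then show ?thesis using is_tree_join_bridge[OF T2 T1 _ i2 i1 2] disj by auto
    next
      case 3
      then have "(p = i1 \<and> q = i2) \<or> (p = i2 \<and> q = i1)" by (auto simp: doubleton_eq_iff)
      then show ?thesis
        using is_tree_join_link_bridge[OF wf1 wf2 disj i1 i2] rtrancl_adj_rel_sym 3 by metis
    qed
  qed
qed

lemma tree_decomposition_image:
  assumes td: "tree_decomposition V E I F B" and inj: "inj_on f I"
  shows "tree_decomposition V E (f ` I) ((`) f ` F) (B \<circ> inv_into I f)"
proof -
  have bag: "(B \<circ> inv_into I f) (f i) = B i" if "i \<in> I" for i using inj that by simp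
  have nodes: "{j\<in>f ` I. v \<in> (B \<circ> inv_into I f) j} = f ` {i\<in>I. v \<in> B i}" for v
    using bag by force
  show ?thesis
    unfolding tree_decomposition_def connected_graph_induced_self nodes
  proof (intro conjI ballI)
    show "is_tree (f ` I) ((`) f ` F)" using is_tree_image[OF tree_decompositionD(1)[OF td] inj] .
    show "(B \<circ> inv_into I f) j \<subseteq> V" if "j \<in> f ` I" for j
      using that bag tree_decompositionD(2)[OF td] by auto
    show "\<exists>j\<in>f ` I. v \<in> (B \<circ> inv_into I f) j" if "v \<in> V" for v
      using that bag tree_decompositionD(3)[OF td] by force
    show "\<exists>j\<in>f ` I. e \<subseteq> (B \<circ> inv_into I f) j" if "e \<in> E" for e
      using that bag tree_decompositionD(4)[OF td] by force
    show "connected_graph (f ` {i\<in>I. v \<in> B i}) ((`) f ` F)" if "v \<in> V" for v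
      using tree_decompositionD(5)[OF td that] by (rule connected_graph_image)
  qed
qed

lemma tree_decomposition_join:
  assumes td1: "tree_decomposition V1 E1 I1 F1 B1" and td2: "tree_decomposition V2 E2 I2 F2 B2"
    and disj: "I1 \<inter> I2 = {}"
    and i1: "i1 \<in> I1" "V1 \<inter> V2 \<subseteq> B1 i1" and i2: "i2 \<in> I2" "V1 \<inter> V2 \<subseteq> B2 i2"
    and E: "E \<subseteq> E1 \<union> E2"
  shows "tree_decomposition (V1 \<union> V2) E (I1 \<union> I2) (F1 \<union> F2 \<union> {{i1, i2}})
           (\<lambda>i. if i \<in> I1 then B1 i else B2 i)"
  unfolding tree_decomposition_def connected_graph_induced_self
proof (intro conjI ballI)
  let ?B = "\<lambda>i. if i \<in> I1 then B1 i else B2 i"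
  let ?F = "F1 \<union> F2 \<union> {{i1, i2}}"
  have B1: "?B i = B1 i" if "i \<in> I1" for i using that by simp
  have B2: "?B i = B2 i" if "i \<in> I2" for i using that disj by auto
  have pick: "\<exists>i\<in>I1 \<union> I2. P (?B i)" if "(\<exists>i\<in>I1. P (B1 i)) \<or> (\<exists>i\<in>I2. P (B2 i))" for P
    using that B1 B2 by (metis UnI1 UnI2)
  note td = tree_decompositionD[OF td1] tree_decompositionD[OF td2]
  show "is_tree (I1 \<union> I2) ?F" by (rule is_tree_join[OF td(1) td(6) disj i1(1) i2(1)])
  show "?B i \<subseteq> V1 \<union> V2" if "i \<in> I1 \<union> I2" for i
    using that td(2,7) B2 by (cases "i \<in> I1") auto
  show "\<exists>i\<in>I1 \<union> I2. v \<in> ?B i" if "v \<in> V1 \<union> V2" for v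
    using that td(3,8) by (intro pick) blast
  show "\<exists>i\<in>I1 \<union> I2. e \<subseteq> ?B i" if "e \<in> E" for e
    using that E td(4,9) by (intro pick) blast
  fix v assume v: "v \<in> V1 \<union> V2"
  let ?T1 = "{i\<in>I1. v \<in> B1 i}" and ?T2 = "{i\<in>I2. v \<in> B2 i}"
  have nodes: "{i\<in>I1 \<union> I2. v \<in> ?B i} = ?T1 \<union> ?T2" using B2 disj by auto
  have "connected_graph (?T1 \<union> ?T2) ?F"
  proof (cases "v \<in> V1 \<and> v \<in> V2")
    case True
    show ?thesis by (rule connected_graph_join[OF td(5) td(10)]) (use True i1 i2 in blast)+
  next
    case False
    then have "?T1 = {} \<and> v \<in> V2 \<or> ?T2 = {} \<and> v \<in> V1" using td(2,7) v by blast
    then show ?thesis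
    proof
      assume T1_empty: "?T1 = {} \<and> v \<in> V2"
      then have "?T1 \<union> ?T2 = ?T2" by blast
      moreover have "connected_graph ?T2 ?F" by (rule connected_graph_mono[OF td(10)]) (use T1_empty in blast)+
      ultimately show ?thesis by (simp only:)
    next
      assume T2_empty: "?T2 = {} \<and> v \<in> V1"
      then have "?T1 \<union> ?T2 = ?T1" by blast
      moreover have "connected_graph ?T1 ?F" by (rule connected_graph_mono[OF td(5)]) (use T2_empty in blast)+
      ultimately show ?thesis by (simp only:)
    qed
  qed
  then show "connected_graph {i\<in>I1 \<union> I2. v \<in> ?B i} ?F" unfolding nodes .
qed

text \<open>The separator is a clique on both sides, hence lies in a bag of each decomposition; the
  two trees are renamed apart (even and odd nodes) and joined at those bags.\<close>
lemma tw_le_clique_sum: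
  assumes tw1: "tw_le V1 E1 k" and tw2: "tw_le V2 E2 k"
    and clique: "\<forall>x\<in>V1 \<inter> V2. \<forall>y\<in>V1 \<inter> V2. x \<noteq> y \<longrightarrow> {x, y} \<in> E1 \<and> {x, y} \<in> E2"
    and E: "E \<subseteq> E1 \<union> E2"
  shows "tw_le (V1 \<union> V2) E k"
proof -
  obtain I1 F1 B1 where td1: "tree_decomposition V1 E1 I1 F1 B1"
    and w1: "\<forall>i\<in>I1. card (B1 i) \<le> k + 1" using tw1 by (auto simp: tw_le_def)
  obtain I2 F2 B2 where td2: "tree_decomposition V2 E2 I2 F2 B2"
    and w2: "\<forall>i\<in>I2. card (B2 i) \<le> k + 1" using tw2 by (auto simp: tw_le_def)
  obtain i1 where i1: "i1 \<in> I1" "V1 \<inter> V2 \<subseteq> B1 i1"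
    using tree_decomposition_clique_in_bag[OF td1, of "V1 \<inter> V2"] clique by blast
  obtain i2 where i2: "i2 \<in> I2" "V1 \<inter> V2 \<subseteq> B2 i2"
    using tree_decomposition_clique_in_bag[OF td2, of "V1 \<inter> V2"] clique by blast
  define f1 where "f1 = (\<lambda>i::nat. 2 * i)"
  define f2 where "f2 = (\<lambda>i::nat. 2 * i + 1)"
  have inj: "inj_on f1 I1" "inj_on f2 I2" by (simp_all add: f1_def f2_def inj_on_def)
  have disj: "f1 ` I1 \<inter> f2 ` I2 = {}" by (auto simp: f1_def f2_def) presburger
  note td1' = tree_decomposition_image[OF td1 inj(1)] and td2' = tree_decomposition_image[OF td2 inj(2)]
  have "tree_decomposition (V1 \<union> V2) E (f1 ` I1 \<union> f2 ` I2) ((`) f1 ` F1 \<union> (`) f2 ` F2 \<union> {{f1 i1, f2 i2}})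
          (\<lambda>i. if i \<in> f1 ` I1 then (B1 \<circ> inv_into I1 f1) i else (B2 \<circ> inv_into I2 f2) i)"
    by (rule tree_decomposition_join[OF td1' td2' disj]) (use i1 i2 inj E in simp_all)
  moreover have "card (if i \<in> f1 ` I1 then (B1 \<circ> inv_into I1 f1) i else (B2 \<circ> inv_into I2 f2) i)
      \<le> k + 1" if i: "i \<in> f1 ` I1 \<union> f2 ` I2" for i
  proof (cases "i \<in> f1 ` I1")
    case True
    then obtain j where "j \<in> I1" "i = f1 j" by blast
    then show ?thesis using w1 inj(1) by simp
  next
    case False
    then obtain j where "j \<in> I2" "i = f2 j" using i by blast
    then show ?thesis using w2 inj(2) False by simp
  qed
  ultimately show ?thesis unfolding tw_le_def by blast
qed

definition contract_into :: "'a set set \<Rightarrow> 'a set \<Rightarrow> 'a \<Rightarrow> 'a set set" where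
  "contract_into E X a = {e\<in>E. e \<inter> X = {}} \<union> {{a, b} | b. b \<notin> X \<and> (\<exists>h\<in>X. {h, b} \<in> E)}"

lemma tree_decomposition_contract_into:
  assumes td: "tree_decomposition V E I F B" and X: "X \<subseteq> V" "connected_graph X E"
    and a: "a \<in> V - X" and h: "h \<in> X" "{h, a} \<in> E"
  shows "tree_decomposition (V - X) (contract_into E X a) I F
           (\<lambda>i. B i - X \<union> (if B i \<inter> X = {} then {} else {a}))"
  unfolding tree_decomposition_def connected_graph_induced_self
proof (intro conjI ballI)
  let ?B = "\<lambda>i. B i - X \<union> (if B i \<inter> X = {} then {} else {a})"
  note td = tree_decompositionD[OF td]
  show "is_tree I F" by (rule td(1))
  show "?B i \<subseteq> V - X" if "i \<in> I" for i using td(2)[OF that] a by auto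
  show "\<exists>i\<in>I. v \<in> ?B i" if "v \<in> V - X" for v using td(3) that by fastforce
  show "\<exists>i\<in>I. e \<subseteq> ?B i" if e: "e \<in> contract_into E X a" for e
  proof (cases "e \<in> E \<and> e \<inter> X = {}")
    case True
    then obtain i where "i \<in> I" "e \<subseteq> B i" using td(4) by blast
    then show ?thesis using True by blast
  next
    case False
    then obtain b h' where "e = {a, b}" "b \<notin> X" "h' \<in> X" "{h', b} \<in> E"
      using e by (auto simp: contract_into_def)
    moreover obtain i where "i \<in> I" "{h', b} \<subseteq> B i" using td(4) calculation(4) by blast
    ultimately show ?thesis by auto
  qed
  fix v assume v: "v \<in> V - X"
  show "connected_graph {i\<in>I. v \<in> ?B i} F"
  proof (cases "v = a")
    case True
    let ?Ta = "{i\<in>I. a \<in> B i}" and ?U = "{i\<in>I. B i \<inter> X \<noteq> {}}"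
    have nodes: "{i\<in>I. v \<in> ?B i} = ?Ta \<union> ?U" using True a by auto
    obtain i where "i \<in> I" "{h, a} \<subseteq> B i" using td(4) h(2) by blast
    then have "?Ta \<inter> ?U \<noteq> {}" using h(1) by blast
    with td(5) a tree_decomposition_nodes_connected[OF assms(1) X] show ?thesis
      unfolding nodes by (blast intro: connected_graph_Un)
  next
    case False
    then have "{i\<in>I. v \<in> ?B i} = {i\<in>I. v \<in> B i}" using v by auto
    then show ?thesis using td(5) v by auto
  qed
qed

lemma tw_le_contract_into:
  assumes tw: "tw_le V E k" and fin: "finite V" and X: "X \<subseteq> V" "connected_graph X E"
    and a: "a \<in> V - X" and h: "h \<in> X" "{h, a} \<in> E"
  shows "tw_le (V - X) (contract_into E X a) k"
proof -
  obtain I F B where td: "tree_decomposition V E I F B" and width: "\<forall>i\<in>I. card (B i) \<le> k + 1"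
    using tw by (auto simp: tw_le_def)
  let ?B = "\<lambda>i. B i - X \<union> (if B i \<inter> X = {} then {} else {a})"
  have "card (?B i) \<le> card (B i)" if "i \<in> I" for i
  proof -
    have finB: "finite (B i)" using tree_decompositionD(2)[OF td that] fin finite_subset by blast
    show ?thesis
    proof (cases "B i \<inter> X = {}")
      case True
      then show ?thesis using finB by (simp add: card_mono)
    next
      case False
      then have "card (B i - X) < card (B i)" using finB by (intro psubset_card_mono) auto
      then show ?thesis using False finB card_insert_le_m1 by (simp add: card_insert_if)
    qed
  qed
  then have "\<forall>i\<in>I. card (?B i) \<le> k + 1" using width by (meson order_trans)
  then show ?thesis
    using tree_decomposition_contract_into[OF td X a h] unfolding tw_le_def by blast
qed

section \<open>The neighbourhood reduction\<close>

lemma nbhd_subset: "nbhd V E X \<subseteq> V - X"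
  by (auto simp: nbhd_def)

lemma finite_nbhd: "wf_graph V E \<Longrightarrow> finite (nbhd V E X)"
  using nbhd_subset[of V E X] finite_subset by (auto simp: wf_graph_def)

lemma cl_nbhd_subset: "X \<subseteq> V \<Longrightarrow> cl_nbhd V E X \<subseteq> V"
  by (auto simp: cl_nbhd_def nbhd_def)

lemma edge_subset_cl_nbhd:
  assumes "wf_graph V E" "e \<in> E" "e \<inter> X \<noteq> {}"
  shows "e \<subseteq> cl_nbhd V E X"
proof -
  obtain x y where e: "e = {x, y}" "x \<in> V" "y \<in> V" using wf_graph_edgeD[OF assms(1,2)] by blast
  then have "{y, x} \<in> E" using assms(2) by (simp add: insert_commute)
  then show ?thesis using e assms(2,3) by (auto simp: cl_nbhd_def nbhd_def)
qed

lemma card_nbhd_le: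
  assumes G: "wf_graph V E" and H: "VH \<subseteq> V" "EH \<subseteq> E" "wf_graph VH EH" "connected_graph VH EH"
    and tw: "tw_le (cl_nbhd V E VH)
               (add_pairs (cl_nbhd V E VH) (induced E (cl_nbhd V E VH)) (clique_edges (nbhd V E VH))) k"
  shows "card (nbhd V E VH) \<le> k"
proof -
  let ?N = "nbhd V E VH" and ?Cl = "cl_nbhd V E VH"
  let ?E = "add_pairs ?Cl (induced E ?Cl) (clique_edges ?N)"
  obtain I F B where td: "tree_decomposition ?Cl ?E I F B" and width: "\<forall>i\<in>I. card (B i) \<le> k + 1"
    using tw by (auto simp: tw_le_def)
  have sub: "VH \<subseteq> ?Cl" "?N \<subseteq> ?Cl" by (auto simp: cl_nbhd_def)
  have "EH \<subseteq> ?E"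
    using H(2) wf_graph_edge_subset[OF H(3)] sub(1) by (auto simp: add_pairs_def induced_def)
  then have conn: "connected_graph VH ?E" using H(4) by (rule connected_graph_mono[rotated])
  have clique: "\<forall>x\<in>?N. \<forall>y\<in>?N. x \<noteq> y \<longrightarrow> {x, y} \<in> ?E"
    using sub(2) by (auto simp: add_pairs_def clique_edges_def)
  have adj: "\<forall>y\<in>?N. \<exists>h\<in>VH. {h, y} \<in> ?E"
  proof
    fix y assume y: "y \<in> ?N"
    then obtain h where "h \<in> VH" "{h, y} \<in> E" by (auto simp: nbhd_def)
    moreover have "{h, y} \<subseteq> ?Cl" using calculation(1) y sub by blast
    ultimately show "\<exists>h\<in>VH. {h, y} \<in> ?E" by (auto simp: add_pairs_def induced_def)
  qed
  obtain i where i: "i \<in> I" "B i \<inter> VH \<noteq> {}" "?N \<subseteq> B i"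
    using tree_decomposition_bag_meets_and_contains[OF td sub(1) conn sub(2) clique adj] by blast
  then obtain h where h: "h \<in> B i" "h \<in> VH" by blast
  have "h \<notin> ?N" using h(2) nbhd_subset[of V E VH] by blast
  moreover have "B i \<subseteq> V" using tree_decompositionD(2)[OF td i(1)] cl_nbhd_subset[OF H(1)] by blast
  then have "finite (B i)" using G finite_subset by (auto simp: wf_graph_def)
  ultimately have "card (insert h ?N) \<le> card (B i)" "card (insert h ?N) = card ?N + 1"
    using h(1) i(3) card_mono[of "B i" "insert h ?N"] finite_subset[of ?N "B i"] by auto
  then show ?thesis using width i(1) by fastforce
qed

lemma card_le_2_member:
  assumes "finite N" "card N \<le> 2" "a \<in> N" "x \<in> N" "y \<in> N" "x \<noteq> y"
  shows "a = x \<or> a = y"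
proof (rule ccontr)
  assume "\<not> ?thesis"
  then have "card {a, x, y} = 3" using assms(6) by auto
  moreover have "card {a, x, y} \<le> card N" using assms by (intro card_mono) auto
  ultimately show False using assms(2) by simp
qed

lemma tw_le_reduced_if_one_neighbour_left:
  assumes G: "wf_graph V E" and tw: "tw_le (V - S) (induced E (V - S)) k"
    and S': "V - VH - S' \<subseteq> V - S" and few: "card (nbhd V E VH - S') \<le> 1"
  shows "tw_le (V - VH - S') (induced (induced E (V - VH) \<union> clique_edges (nbhd V E VH)) (V - VH - S')) k"
proof (rule tw_le_subgraph[OF tw _ S'])
  let ?N = "nbhd V E VH"
  show "finite (V - S)" using G by (simp add: wf_graph_def)
  have "finite (?N - S')" using finite_nbhd[OF G] by simp
  moreover have "card (?N - S') \<le> Suc 0" using few by simp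
  ultimately have single: "\<forall>x\<in>?N - S'. \<forall>y\<in>?N - S'. x = y" using card_le_Suc0_iff_eq by blast
  show "induced (induced E (V - VH) \<union> clique_edges ?N) (V - VH - S')
      \<subseteq> induced (induced E (V - S)) (V - VH - S')"
  proof
    fix e assume e: "e \<in> induced (induced E (V - VH) \<union> clique_edges ?N) (V - VH - S')"
    have "e \<notin> clique_edges ?N"
    proof
      assume "e \<in> clique_edges ?N"
      then obtain x y where "e = {x, y}" "x \<in> ?N" "y \<in> ?N" "x \<noteq> y"
        by (auto simp: clique_edges_def)
      then show False using e single by (auto simp: induced_def)
    qed
    then show "e \<in> induced (induced E (V - S)) (V - VH - S')" using e S' by (auto simp: induced_def)
  qed
qed

text \<open>Only the edge between the two surviving neighbours is new, and it is one of the edges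
  created by merging V(H) into a.\<close>
lemma reduced_edges_subset_contract_into:
  assumes G: "wf_graph V E" and H: "VH \<subseteq> V - S"
    and a: "a \<in> nbhd V E VH - S" and two: "card (nbhd V E VH - S) \<le> 2"
  shows "induced (induced E (V - VH) \<union> clique_edges (nbhd V E VH)) (V - VH - S)
           \<subseteq> contract_into (induced E (V - S)) VH a"
proof
  let ?N = "nbhd V E VH"
  fix e assume e: "e \<in> induced (induced E (V - VH) \<union> clique_edges ?N) (V - VH - S)"
  show "e \<in> contract_into (induced E (V - S)) VH a"
  proof (cases "e \<in> clique_edges ?N")
    case True
    then obtain x y where xy: "e = {x, y}" "x \<in> ?N - S" "y \<in> ?N - S" "x \<noteq> y"
      using e by (auto simp: clique_edges_def induced_def)
    have "finite (?N - S)" using finite_nbhd[OF G] by simp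
    then obtain b where b: "e = {a, b}" "b \<in> ?N - S"
      using card_le_2_member[OF _ two a xy(2-4)] xy by (auto simp: insert_commute)
    then obtain h where "h \<in> VH" "{h, b} \<in> E" by (auto simp: nbhd_def)
    then have "{h, b} \<in> induced E (V - S)" using b(2) H nbhd_subset[of V E VH] by (auto simp: induced_def)
    then show ?thesis using b \<open>h \<in> VH\<close> nbhd_subset[of V E VH] by (auto simp: contract_into_def)
  next
    case False
    then show ?thesis using e by (auto simp: contract_into_def induced_def)
  qed
qed

lemma tw_le_reduced_by_contraction:
  assumes G: "wf_graph V E" and H: "VH \<subseteq> V - S" "connected_graph VH E"
    and tw: "tw_le (V - S) (induced E (V - S)) k"
    and a: "a \<in> nbhd V E VH - S" and two: "card (nbhd V E VH - S) \<le> 2"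
  shows "tw_le (V - VH - S) (induced (induced E (V - VH) \<union> clique_edges (nbhd V E VH)) (V - VH - S)) k"
proof -
  let ?W = "V - S"
  have fin: "finite ?W" using G by (simp add: wf_graph_def)
  obtain h where h: "h \<in> VH" "{h, a} \<in> E" using a by (auto simp: nbhd_def)
  have a': "a \<in> ?W - VH" using a nbhd_subset[of V E VH] by blast
  then have "{h, a} \<in> induced E ?W" using h H(1) by (auto simp: induced_def)
  moreover have "connected_graph VH (induced E ?W)" using H by (simp add: connected_graph_induced_iff)
  ultimately have "tw_le (?W - VH) (contract_into (induced E ?W) VH a) k"
    using tw_le_contract_into[OF tw fin H(1) _ a' h(1)] by blast
  moreover have "?W - VH = V - VH - S" by blast
  ultimately have contracted: "tw_le (V - VH - S) (contract_into (induced E ?W) VH a) k" by simp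
  show ?thesis
  proof (rule tw_le_subgraph[OF contracted])
    show "induced (induced E (V - VH) \<union> clique_edges (nbhd V E VH)) (V - VH - S)
        \<subseteq> induced (contract_into (induced E ?W) VH a) (V - VH - S)"
      using reduced_edges_subset_contract_into[OF G H(1) a two] by (auto simp: induced_def)
  qed (use G in \<open>simp_all add: wf_graph_def\<close>)
qed

lemma has_solutionI:
  "S \<subseteq> V \<Longrightarrow> card S \<le> t \<Longrightarrow> tw_le (V - S) (induced E (V - S)) 2 \<Longrightarrow> has_solution V E t"
  unfolding has_solution_def is_solution_def by blast

lemma has_solution_reduced_if_has_solution:
  assumes G: "wf_graph V E" and H: "VH \<subseteq> V" "connected_graph VH E"
    and N: "card (nbhd V E VH) \<le> 2" and sol: "has_solution V E t"
  shows "has_solution (V - VH) (induced E (V - VH) \<union> clique_edges (nbhd V E VH)) t"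
proof -
  let ?N = "nbhd V E VH"
  obtain S where S: "S \<subseteq> V" "card S \<le> t" "tw_le (V - S) (induced E (V - S)) 2"
    using sol by (auto simp: has_solution_def is_solution_def)
  have finS: "finite S" using S(1) G finite_subset by (auto simp: wf_graph_def)
  have finN: "finite (?N - S)" using finite_nbhd[OF G] by simp
  have NH: "?N \<inter> VH = {}" using nbhd_subset[of V E VH] by blast
  let ?reduced_tw = "\<lambda>S'. tw_le (V - VH - S') (induced (induced E (V - VH) \<union> clique_edges ?N) (V - VH - S')) 2"
  show ?thesis
  proof (cases "card (?N - S) \<le> 1")
    case True
    have "?N - (S - VH) = ?N - S" using NH by blast
    then have few: "card (?N - (S - VH)) \<le> 1" using True by simp
    have "?reduced_tw (S - VH)" using tw_le_reduced_if_one_neighbour_left[OF G S(3) _ few] by blast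
    moreover have "card (S - VH) \<le> t" using S(2) card_mono[OF finS, of "S - VH"] by simp
    moreover have "S - VH \<subseteq> V - VH" using S(1) by blast
    ultimately show ?thesis by (intro has_solutionI)
  next
    case False
    then have "?N - S \<noteq> {}" by force
    then obtain a where a: "a \<in> ?N - S" by blast
    have two: "card (?N - S) \<le> 2" using N card_mono[OF finite_nbhd[OF G, of VH], of "?N - S"] by simp
    show ?thesis
    proof (cases "S \<inter> VH = {}")
      case True
      then have "VH \<subseteq> V - S" using H(1) by blast
      then have "?reduced_tw S" by (rule tw_le_reduced_by_contraction[OF G _ H(2) S(3) a two])
      moreover have "S \<subseteq> V - VH" using S(1) \<open>VH \<subseteq> V - S\<close> by blast
      ultimately show ?thesis using S(2) by (intro has_solutionI)
    next
      case False
      let ?S' = "insert a (S - VH)"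
      have "?S' \<subseteq> V - VH" using S(1) a nbhd_subset[of V E VH] by blast
      moreover have "card (S - VH) < card S" using False finS by (intro psubset_card_mono) auto
      then have "card ?S' \<le> t" using S(2) finS by (simp add: card_insert_if)
      moreover have "?N - ?S' = (?N - S) - {a}" using NH by blast
      then have few: "card (?N - ?S') \<le> 1" using a two finN by simp
      then have "?reduced_tw ?S'" using tw_le_reduced_if_one_neighbour_left[OF G S(3) _ few] by blast
      ultimately show ?thesis by (intro has_solutionI)
    qed
  qed
qed

lemma has_solution_if_has_solution_reduced:
  assumes G: "wf_graph V E" and HV: "VH \<subseteq> V"
    and tw: "tw_le (cl_nbhd V E VH)
               (add_pairs (cl_nbhd V E VH) (induced E (cl_nbhd V E VH)) (clique_edges (nbhd V E VH))) 2"
    and sol: "has_solution (V - VH) (induced E (V - VH) \<union> clique_edges (nbhd V E VH)) t"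
  shows "has_solution V E t"
proof -
  let ?N = "nbhd V E VH" and ?Cl = "cl_nbhd V E VH"
  let ?E1 = "add_pairs ?Cl (induced E ?Cl) (clique_edges ?N)"
  let ?E2 = "induced E (V - VH) \<union> clique_edges ?N"
  obtain S where S: "S \<subseteq> V - VH" "card S \<le> t" "tw_le (V - VH - S) (induced ?E2 (V - VH - S)) 2"
    using sol by (auto simp: has_solution_def is_solution_def)
  have Cl: "?Cl \<subseteq> V" "VH \<subseteq> ?Cl" "?N \<subseteq> ?Cl" using cl_nbhd_subset[OF HV] by (auto simp: cl_nbhd_def)
  have tw1: "tw_le (?Cl - S) (induced ?E1 (?Cl - S)) 2"
    by (rule tw_le_subgraph[OF tw]) (use G Cl(1) finite_subset in \<open>auto simp: wf_graph_def induced_def\<close>)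
  have sep: "(?Cl - S) \<inter> (V - VH - S) = ?N - S"
    using Cl nbhd_subset[of V E VH] by (auto simp: cl_nbhd_def)
  have clique: "\<forall>x\<in>(?Cl - S) \<inter> (V - VH - S). \<forall>y\<in>(?Cl - S) \<inter> (V - VH - S). x \<noteq> y \<longrightarrow>
      {x, y} \<in> induced ?E1 (?Cl - S) \<and> {x, y} \<in> induced ?E2 (V - VH - S)"
  proof (intro ballI impI)
    fix x y assume "x \<in> (?Cl - S) \<inter> (V - VH - S)" "y \<in> (?Cl - S) \<inter> (V - VH - S)" "x \<noteq> y"
    moreover have "{x, y} \<in> clique_edges ?N" using calculation sep by (auto simp: clique_edges_def)
    ultimately show "{x, y} \<in> induced ?E1 (?Cl - S) \<and> {x, y} \<in> induced ?E2 (V - VH - S)"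
      by (auto simp: add_pairs_def induced_def)
  qed
  have edges: "induced E (V - S) \<subseteq> induced ?E1 (?Cl - S) \<union> induced ?E2 (V - VH - S)"
  proof
    fix e assume e: "e \<in> induced E (V - S)"
    then have "e \<in> E" "e \<subseteq> V - S" by (auto simp: induced_def)
    show "e \<in> induced ?E1 (?Cl - S) \<union> induced ?E2 (V - VH - S)"
    proof (cases "e \<inter> VH = {}")
      case True
      then show ?thesis using \<open>e \<in> E\<close> \<open>e \<subseteq> V - S\<close> by (auto simp: induced_def)
    next
      case False
      then have "e \<subseteq> ?Cl" by (rule edge_subset_cl_nbhd[OF G \<open>e \<in> E\<close>])
      then show ?thesis using \<open>e \<in> E\<close> \<open>e \<subseteq> V - S\<close> by (auto simp: add_pairs_def induced_def)
    qed
  qed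
  have "tw_le ((?Cl - S) \<union> (V - VH - S)) (induced E (V - S)) 2"
    by (rule tw_le_clique_sum[OF tw1 S(3) clique edges])
  moreover have "(?Cl - S) \<union> (V - VH - S) = V - S" using Cl by blast
  ultimately have "tw_le (V - S) (induced E (V - S)) 2" by simp
  moreover have "S \<subseteq> V" using S(1) by blast
  ultimately show ?thesis using S(2) by (intro has_solutionI)
qed

theorem mainTheorem3:
  fixes V :: "'a set" and E :: "'a set set" and t :: nat
    and VH :: "'a set" and EH :: "'a set set"
  assumes G: "wf_graph V E"
    and H_sub: "VH \<subseteq> V" "EH \<subseteq> E" "wf_graph VH EH"
    and H_conn: "connected_graph VH EH"
    and tw_H: "tw_le (cl_nbhd V E VH)
                 (add_pairs (cl_nbhd V E VH) (induced E (cl_nbhd V E VH))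
                    (clique_edges (nbhd V E VH))) 2"
  shows "has_solution V E t \<longleftrightarrow>
         has_solution (V - VH) (induced E (V - VH) \<union> clique_edges (nbhd V E VH)) t"
proof
  have "connected_graph VH E" using H_conn H_sub(2) by (rule connected_graph_mono)
  moreover have "card (nbhd V E VH) \<le> 2" by (rule card_nbhd_le[OF G H_sub H_conn tw_H])
  ultimately show "has_solution (V - VH) (induced E (V - VH) \<union> clique_edges (nbhd V E VH)) t"
    if "has_solution V E t"
    using has_solution_reduced_if_has_solution[OF G H_sub(1)] that by blast
next
  show "has_solution V E t"
    if "has_solution (V - VH) (induced E (V - VH) \<union> clique_edges (nbhd V E VH)) t"
    by (rule has_solution_if_has_solution_reduced[OF G H_sub(1) tw_H that])
qed

end
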